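(* Let $\Omega$ be a set and let $G=H\times K\leq{\rm Sym}(\Omega)$ be finite, the internal direct product of subgroups $H,K$ with $\gcd(|H|,|K|)=1$, and suppose $H$ is abelian. Let $\overline{\Omega}=\{\alpha^H\mid\alpha\in\Omega\}$ be the set of $H$-orbits, on which $K$ acts by $(\alpha^H)^k=(\alpha^k)^H$. Suppose $H^{(2),\Omega}=H$ and $K^{(2),\overline{\Omega}}=K$. Then $G^{(2),\Omega}=G$.
   Context: Permutations act on the right. For $X\leq{\rm Sym}(\Omega)$, the $2$-closure of $X$ on $\Omega$ is $X^{(2),\Omega}=\{\theta\in{\rm Sym}(\Omega)\mid \forall \alpha,\beta\in\Omega\ \exists g\in X:\ \alpha^\theta=\alpha^g,\ \beta^\theta=\beta^g\}$. Here $K^{(2),\overline{\Omega}}$ is the $2$-closure on $\overline{\Omega}$ of the permutation group induced by $K$ on $\overline{\Omega}$, and $K^{(2),\overline{\Omega}}=K$ means that this induced group coincides with its $2$-closure (with $K$ identified with its image). *)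

theory Defs
  imports "HOL-Combinatorics.Permutations"
begin

(* Permutations act on the right: alpha^g is written g alpha, so the product
   g h (first g, then h) is the function h \<circ> g. *)

definition perm_group :: "'a set \<Rightarrow> ('a \<Rightarrow> 'a) set \<Rightarrow> bool" where
  "perm_group \<Omega> X \<longleftrightarrow> X \<subseteq> {p. p permutes \<Omega>} \<and> id \<in> X \<and>
     (\<forall>g\<in>X. \<forall>h\<in>X. h \<circ> g \<in> X) \<and> (\<forall>g\<in>X. inv g \<in> X)"

definition two_closure :: "'a set \<Rightarrow> ('a \<Rightarrow> 'a) set \<Rightarrow> ('a \<Rightarrow> 'a) set" where
  "two_closure \<Omega> X = {\<theta>. \<theta> permutes \<Omega> \<and>
     (\<forall>\<alpha>\<in>\<Omega>. \<forall>\<beta>\<in>\<Omega>. \<exists>g\<in>X. \<theta> \<alpha> = g \<alpha> \<and> \<theta> \<beta> = g \<beta>)}"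

definition internal_direct_product ::
  "'a set \<Rightarrow> ('a \<Rightarrow> 'a) set \<Rightarrow> ('a \<Rightarrow> 'a) set \<Rightarrow> ('a \<Rightarrow> 'a) set \<Rightarrow> bool" where
  "internal_direct_product \<Omega> G H K \<longleftrightarrow>
     perm_group \<Omega> G \<and> perm_group \<Omega> H \<and> perm_group \<Omega> K \<and> H \<subseteq> G \<and> K \<subseteq> G \<and>
     (\<forall>g\<in>G. \<forall>h\<in>H. inv g \<circ> h \<circ> g \<in> H) \<and>
     (\<forall>g\<in>G. \<forall>k\<in>K. inv g \<circ> k \<circ> g \<in> K) \<and>
     H \<inter> K = {id} \<and> G = {k \<circ> h | h k. h \<in> H \<and> k \<in> K}"

definition orbit :: "('a \<Rightarrow> 'a) set \<Rightarrow> 'a \<Rightarrow> 'a set" where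
  "orbit H \<alpha> = {h \<alpha> | h. h \<in> H}"

definition orbits :: "'a set \<Rightarrow> ('a \<Rightarrow> 'a) set \<Rightarrow> 'a set set" where
  "orbits \<Omega> H = {orbit H \<alpha> | \<alpha>. \<alpha> \<in> \<Omega>}"

definition induced_perm :: "'a set set \<Rightarrow> ('a \<Rightarrow> 'a) \<Rightarrow> 'a set \<Rightarrow> 'a set" where
  "induced_perm \<Delta> k = (\<lambda>B. if B \<in> \<Delta> then k ` B else B)"

definition induced_group :: "'a set set \<Rightarrow> ('a \<Rightarrow> 'a) set \<Rightarrow> ('a set \<Rightarrow> 'a set) set" where
  "induced_group \<Delta> K = induced_perm \<Delta> ` K"

end

theory Submission
  imports Defs "HOL-Algebra.Multiplicative_Group"
begin

text \<open>
  Let \<open>\<theta>\<close> lie in the 2-closure of \<open>G = H \<times> K\<close>. Since \<open>G\<close> centralizes the abelian group \<open>H\<close>,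
  \<open>\<theta>\<close> maps \<open>H\<close>-orbits to \<open>H\<close>-orbits, and the permutation it induces on the orbits lies in the
  2-closure of the group induced by \<open>K\<close>; hence it is induced by some \<open>k \<in> K\<close>, and \<open>k\<^sup>-\<^sup>1\<theta>\<close>
  fixes every \<open>H\<close>-orbit setwise. Because the orders are coprime, an element of \<open>K\<close> that maps a
  point into its own \<open>H\<close>-orbit fixes it, so on any two points \<open>k\<^sup>-\<^sup>1\<theta>\<close> agrees with the
  \<open>H\<close>-component of an element of \<open>G\<close>. Thus \<open>k\<^sup>-\<^sup>1\<theta>\<close> lies in the 2-closure of \<open>H\<close>, which is
  \<open>H\<close>, and \<open>\<theta> \<in> KH = G\<close>.
\<close>

(* HOL-Algebra's group inverse would otherwise shadow the function inverse used in Defs. *)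
no_notation m_inv (\<open>(\<open>open_block notation=\<open>prefix inv\<close>\<close>inv\<index> _)\<close> [81] 80)

lemma perm_group_permutes: "perm_group \<Omega> X \<Longrightarrow> x \<in> X \<Longrightarrow> x permutes \<Omega>"
  by (auto simp: perm_group_def)

lemma perm_group_comp: "perm_group \<Omega> X \<Longrightarrow> x \<in> X \<Longrightarrow> y \<in> X \<Longrightarrow> y \<circ> x \<in> X"
  by (auto simp: perm_group_def)

lemma perm_group_inv: "perm_group \<Omega> X \<Longrightarrow> x \<in> X \<Longrightarrow> inv x \<in> X"
  by (auto simp: perm_group_def)

lemma perm_group_id: "perm_group \<Omega> X \<Longrightarrow> id \<in> X"
  by (auto simp: perm_group_def)

lemma perm_group_funpow_card:
  assumes X: "perm_group \<Omega> X" and "finite X" and x: "x \<in> X"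
  shows "x ^^ card X = id"
proof -
  define M :: "('a \<Rightarrow> 'a) monoid" where "M = \<lparr>carrier = X, mult = (\<circ>), one = id\<rparr>"
  have "group M"
  proof (rule groupI)
    fix a assume "a \<in> carrier M"
    then have "inv a \<in> X" "inv a \<circ> a = id"
      using perm_group_inv[OF X] permutes_inv_o(2)[OF perm_group_permutes[OF X]] by (auto simp: M_def)
    then show "\<exists>b\<in>carrier M. b \<otimes>\<^bsub>M\<^esub> a = \<one>\<^bsub>M\<^esub>"
      by (auto simp: M_def)
  qed (use X in \<open>auto simp: M_def perm_group_def o_assoc\<close>)
  moreover have "x [^]\<^bsub>M\<^esub> n = x ^^ n" for n :: nat
    by (induction n) (simp_all add: M_def funpow_swap1 fun_eq_iff)
  ultimately show ?thesis
    using group.pow_order_eq_1[of M x] x by (simp add: M_def order_def)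
qed

lemma funpow_gcd_fixpoint:
  "(f ^^ m) x = x \<Longrightarrow> (f ^^ n) x = x \<Longrightarrow> (f ^^ gcd m n) x = x"
proof (induction m n rule: gcd_nat_induct)
  case (step m n)
  then have "(f ^^ gcd n (m mod n)) x = x" by (simp add: funpow_mod_eq)
  then show ?case by (simp only: gcd_red_nat[of m n])
qed simp

text \<open>The shared value \<open>f x = g x\<close> propagates to \<open>(f ^^ i) x = (g ^^ i) x\<close>, so \<open>x\<close> is fixed by
  \<open>f ^^ n\<close> as well as by \<open>f ^^ m\<close>.\<close>
lemma commuting_coprime_funpow_fixpoint:
  assumes comm: "f \<circ> g = g \<circ> f" and "f x = g x"
    and f: "f ^^ m = id" and g: "g ^^ n = id" and "coprime m n"
  shows "f x = x"
proof -
  have "(f ^^ i) x = (g ^^ i) x" for i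
  proof (induction i)
    case (Suc i)
    have "f \<circ> g ^^ i = g ^^ i \<circ> f"
      using comm by (induction i) (simp_all add: funpow_Suc_right, metis comp_assoc)
    with Suc \<open>f x = g x\<close> show ?case by (simp add: funpow_swap1 fun_eq_iff)
  qed simp
  then have "(f ^^ n) x = x" using g by simp
  with f have "(f ^^ gcd m n) x = x" by (simp add: funpow_gcd_fixpoint)
  with \<open>coprime m n\<close> show ?thesis by simp
qed

lemma orbit_conv_image: "orbit H \<alpha> = (\<lambda>h. h \<alpha>) ` H"
  by (auto simp: orbit_def)

lemma orbit_self: "perm_group \<Omega> H \<Longrightarrow> \<alpha> \<in> orbit H \<alpha>"
  unfolding orbit_def by (metis (mono_tags, lifting) perm_group_id id_apply mem_Collect_eq)

lemma orbit_subset: "perm_group \<Omega> H \<Longrightarrow> \<alpha> \<in> \<Omega> \<Longrightarrow> orbit H \<alpha> \<subseteq> \<Omega>"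
  by (auto simp: orbit_def permutes_in_image perm_group_permutes)

lemma orbit_eq:
  assumes H: "perm_group \<Omega> H" and "\<beta> \<in> orbit H \<alpha>"
  shows "orbit H \<beta> = orbit H \<alpha>"
proof -
  obtain h where h: "h \<in> H" "\<beta> = h \<alpha>" using \<open>\<beta> \<in> orbit H \<alpha>\<close> by (auto simp: orbit_def)
  show ?thesis
  proof
    show "orbit H \<beta> \<subseteq> orbit H \<alpha>"
      using h perm_group_comp[OF H] by (auto simp: orbit_def) (metis comp_apply)
    have "h' \<alpha> = (h' \<circ> inv h) \<beta>" for h' :: "'a \<Rightarrow> 'a"
      using h permutes_inverses(2)[OF perm_group_permutes[OF H h(1)]] by simp
    then show "orbit H \<alpha> \<subseteq> orbit H \<beta>"
      using perm_group_comp[OF H perm_group_inv[OF H h(1)]] by (auto simp: orbit_def) (metis comp_apply)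
  qed
qed

lemma image_orbit_commuting:
  assumes "\<forall>h\<in>H. g \<circ> h = h \<circ> g"
  shows "g ` orbit H \<alpha> = orbit H (g \<alpha>)"
proof -
  have "g (h \<alpha>) = h (g \<alpha>)" if "h \<in> H" for h
    using assms that by (metis comp_apply)
  then show ?thesis
    by (simp add: orbit_conv_image image_image cong: image_cong)
qed

lemma subset_two_closure: "perm_group \<Omega> G \<Longrightarrow> G \<subseteq> two_closure \<Omega> G"
  by (auto simp: two_closure_def perm_group_permutes)

lemma two_closure_comp_left:
  assumes G: "perm_group \<Omega> G" and g: "g \<in> G" and \<theta>: "\<theta> \<in> two_closure \<Omega> G"
  shows "g \<circ> \<theta> \<in> two_closure \<Omega> G"
  unfolding two_closure_def
proof (intro CollectI conjI ballI)
  show "g \<circ> \<theta> permutes \<Omega>"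
    using \<theta> perm_group_permutes[OF G g] by (simp add: two_closure_def permutes_compose)
  fix \<alpha> \<beta> assume "\<alpha> \<in> \<Omega>" "\<beta> \<in> \<Omega>"
  then obtain g' where "g' \<in> G" "\<theta> \<alpha> = g' \<alpha>" "\<theta> \<beta> = g' \<beta>"
    using \<theta> by (auto simp: two_closure_def)
  then show "\<exists>f\<in>G. (g \<circ> \<theta>) \<alpha> = f \<alpha> \<and> (g \<circ> \<theta>) \<beta> = f \<beta>"
    using perm_group_comp[OF G _ g] by (intro bexI[of _ "g \<circ> g'"]) auto
qed

lemma two_closure_image_orbit:
  assumes G: "perm_group \<Omega> G" and H: "perm_group \<Omega> H"
    and central: "\<forall>g\<in>G. \<forall>h\<in>H. g \<circ> h = h \<circ> g"
    and \<theta>: "\<theta> \<in> two_closure \<Omega> G" and \<alpha>: "\<alpha> \<in> \<Omega>"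
  shows "\<theta> ` orbit H \<alpha> = orbit H (\<theta> \<alpha>)"
proof -
  have \<theta>_perm: "\<theta> permutes \<Omega>"
    and agree: "\<And>\<gamma>. \<gamma> \<in> \<Omega> \<Longrightarrow> \<exists>g\<in>G. \<theta> \<alpha> = g \<alpha> \<and> \<theta> \<gamma> = g \<gamma>"
    using \<theta> \<alpha> by (auto simp: two_closure_def)
  have "\<theta> \<gamma> \<in> orbit H (\<theta> \<alpha>) \<longleftrightarrow> \<gamma> \<in> orbit H \<alpha>" if \<gamma>: "\<gamma> \<in> \<Omega>" for \<gamma>
  proof -
    obtain g where g: "g \<in> G" "\<theta> \<alpha> = g \<alpha>" "\<theta> \<gamma> = g \<gamma>" using agree[OF \<gamma>] by blast
    have "g \<gamma> \<in> g ` orbit H \<alpha> \<longleftrightarrow> \<gamma> \<in> orbit H \<alpha>"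
      using permutes_inj[OF perm_group_permutes[OF G g(1)]] by (simp add: inj_image_mem_iff)
    then show ?thesis using g image_orbit_commuting[of H g \<alpha>] central by simp
  qed
  moreover have "orbit H (\<theta> \<alpha>) \<subseteq> \<theta> ` \<Omega>"
    using orbit_subset[OF H] \<alpha> permutes_image[OF \<theta>_perm] permutes_in_image[OF \<theta>_perm] by auto
  ultimately show ?thesis
    using orbit_subset[OF H \<alpha>] by fastforce
qed

lemma induced_perm_permutes:
  assumes \<theta>: "\<theta> permutes \<Omega>" and image: "\<And>\<alpha>. \<alpha> \<in> \<Omega> \<Longrightarrow> \<theta> ` orbit H \<alpha> = orbit H (\<theta> \<alpha>)"
  shows "induced_perm (orbits \<Omega> H) \<theta> permutes orbits \<Omega> H"
proof (rule bij_imp_permutes)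
  show "induced_perm (orbits \<Omega> H) \<theta> B = B" if "B \<notin> orbits \<Omega> H" for B
    using that by (simp add: induced_perm_def)
  have orbits: "orbits \<Omega> H = orbit H ` \<Omega>"
    by (auto simp: orbits_def)
  have "induced_perm (orbits \<Omega> H) \<theta> ` orbits \<Omega> H = (\<lambda>\<alpha>. orbit H (\<theta> \<alpha>)) ` \<Omega>"
    using image by (auto simp: orbits induced_perm_def image_image cong: image_cong)
  also have "\<dots> = orbit H ` (\<theta> ` \<Omega>)"
    by (simp add: image_image)
  finally have "induced_perm (orbits \<Omega> H) \<theta> ` orbits \<Omega> H = orbits \<Omega> H"
    by (simp add: orbits permutes_image[OF \<theta>])
  moreover have "inj_on (induced_perm (orbits \<Omega> H) \<theta>) (orbits \<Omega> H)"
    using permutes_inj[OF \<theta>] by (auto intro!: inj_onI simp: induced_perm_def inj_image_eq_iff)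
  ultimately show "bij_betw (induced_perm (orbits \<Omega> H) \<theta>) (orbits \<Omega> H) (orbits \<Omega> H)"
    by (simp add: bij_betw_def)
qed

lemma image_orbit_abelian:
  assumes H: "perm_group \<Omega> H" and abelian: "\<forall>h1\<in>H. \<forall>h2\<in>H. h1 \<circ> h2 = h2 \<circ> h1"
    and h: "h \<in> H"
  shows "h ` orbit H \<alpha> = orbit H \<alpha>"
proof -
  have "h ` orbit H \<alpha> = orbit H (h \<alpha>)"
    using abelian h by (intro image_orbit_commuting) blast
  also have "\<dots> = orbit H \<alpha>"
    using h by (intro orbit_eq[OF H]) (auto simp: orbit_def)
  finally show ?thesis .
qed

lemma inv_comp_in_orbit_if_induced_perm_eq:
  assumes H: "perm_group \<Omega> H" and k: "k permutes \<Omega>"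
    and eq: "induced_perm (orbits \<Omega> H) \<theta> = induced_perm (orbits \<Omega> H) k" and \<alpha>: "\<alpha> \<in> \<Omega>"
  shows "(inv k \<circ> \<theta>) \<alpha> \<in> orbit H \<alpha>"
proof -
  have "orbit H \<alpha> \<in> orbits \<Omega> H"
    using \<alpha> by (auto simp: orbits_def)
  then have "\<theta> ` orbit H \<alpha> = k ` orbit H \<alpha>"
    using fun_cong[OF eq, of "orbit H \<alpha>"] by (simp add: induced_perm_def)
  then have "\<theta> \<alpha> \<in> k ` orbit H \<alpha>"
    using orbit_self[OF H] by blast
  then show ?thesis
    using permutes_inverses(2)[OF k] by auto
qed

locale perm_direct_product =
  fixes \<Omega> :: "'a set" and G H K :: "('a \<Rightarrow> 'a) set"
  assumes internal_direct_product: "internal_direct_product \<Omega> G H K"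
begin

lemma perm_group_G: "perm_group \<Omega> G"
  and perm_group_H: "perm_group \<Omega> H"
  and perm_group_K: "perm_group \<Omega> K"
  and H_subset: "H \<subseteq> G"
  and K_subset: "K \<subseteq> G"
  and normal_H: "\<And>g h. g \<in> G \<Longrightarrow> h \<in> H \<Longrightarrow> inv g \<circ> h \<circ> g \<in> H"
  and normal_K: "\<And>g k. g \<in> G \<Longrightarrow> k \<in> K \<Longrightarrow> inv g \<circ> k \<circ> g \<in> K"
  and H_inter_K: "H \<inter> K = {id}"
  and G_eq: "G = {k \<circ> h | h k. h \<in> H \<and> k \<in> K}"
  using internal_direct_product unfolding internal_direct_product_def by auto

lemma decompose:
  assumes "g \<in> G"
  obtains h k where "g = k \<circ> h" "h \<in> H" "k \<in> K"
  using assms G_eq by auto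

text \<open>The commutator of \<open>h\<close> and \<open>k\<close> lies in \<open>H \<inter> K\<close> by normality of both factors.\<close>
lemma commute:
  assumes h: "h \<in> H" and k: "k \<in> K"
  shows "k \<circ> h = h \<circ> k"
proof -
  define c where "c = inv k \<circ> inv h \<circ> k \<circ> h"
  have "inv h \<circ> k \<circ> h \<in> K"
    using normal_K h k H_subset by auto
  then have "inv k \<circ> (inv h \<circ> k \<circ> h) \<in> K"
    using perm_group_comp[OF perm_group_K _ perm_group_inv[OF perm_group_K k]] by blast
  then have "c \<in> K"
    by (simp add: c_def o_assoc)
  moreover have "inv k \<circ> inv h \<circ> k \<in> H"
    using normal_H k K_subset perm_group_inv[OF perm_group_H h] by auto
  then have "c \<in> H"
    using perm_group_comp[OF perm_group_H h] by (simp add: c_def)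
  ultimately have "c = id"
    using H_inter_K by auto
  moreover have "h \<circ> k \<circ> c = k \<circ> h"
    using permutes_inverses(1)[OF perm_group_permutes[OF perm_group_H h]]
      permutes_inverses(1)[OF perm_group_permutes[OF perm_group_K k]]
    by (simp add: c_def fun_eq_iff)
  ultimately show ?thesis by simp
qed

lemma centralizes_H:
  assumes abelian: "\<forall>h1\<in>H. \<forall>h2\<in>H. h1 \<circ> h2 = h2 \<circ> h1" and "g \<in> G" "h \<in> H"
  shows "g \<circ> h = h \<circ> g"
proof -
  obtain h' k where g: "g = k \<circ> h'" "h' \<in> H" "k \<in> K"
    using \<open>g \<in> G\<close> by (rule decompose)
  have "k \<circ> h' \<circ> h = k \<circ> h \<circ> h'"
    using abelian g \<open>h \<in> H\<close> by (simp add: comp_assoc)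
  also have "\<dots> = h \<circ> (k \<circ> h')"
    using commute[OF \<open>h \<in> H\<close> g(3)] by (simp add: comp_assoc)
  finally show ?thesis using g by simp
qed

lemma induced_perm_two_closure:
  assumes abelian: "\<forall>h1\<in>H. \<forall>h2\<in>H. h1 \<circ> h2 = h2 \<circ> h1" and \<theta>: "\<theta> \<in> two_closure \<Omega> G"
  shows "induced_perm (orbits \<Omega> H) \<theta> \<in> two_closure (orbits \<Omega> H) (induced_group (orbits \<Omega> H) K)"
proof -
  let ?\<Delta> = "orbits \<Omega> H"
  have central: "\<forall>g\<in>G. \<forall>h\<in>H. g \<circ> h = h \<circ> g"
    using centralizes_H[OF abelian] by blast
  have image: "\<theta> ` orbit H \<alpha> = orbit H (\<theta> \<alpha>)" if "\<alpha> \<in> \<Omega>" for \<alpha>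
    using two_closure_image_orbit[OF perm_group_G perm_group_H central \<theta> that] .
  have "induced_perm ?\<Delta> \<theta> permutes ?\<Delta>"
    using \<theta> image by (intro induced_perm_permutes) (auto simp: two_closure_def)
  moreover have "\<exists>f\<in>induced_group ?\<Delta> K. induced_perm ?\<Delta> \<theta> B1 = f B1 \<and> induced_perm ?\<Delta> \<theta> B2 = f B2"
    if B: "B1 \<in> ?\<Delta>" "B2 \<in> ?\<Delta>" for B1 B2
  proof -
    obtain \<alpha> \<beta> where \<alpha>\<beta>: "\<alpha> \<in> \<Omega>" "\<beta> \<in> \<Omega>" "B1 = orbit H \<alpha>" "B2 = orbit H \<beta>"
      using B by (auto simp: orbits_def)
    obtain g where g: "g \<in> G" "\<theta> \<alpha> = g \<alpha>" "\<theta> \<beta> = g \<beta>"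
      using \<theta> \<alpha>\<beta> by (auto simp: two_closure_def)
    obtain h k where hk: "g = k \<circ> h" "h \<in> H" "k \<in> K"
      using g(1) by (rule decompose)
    have "induced_perm ?\<Delta> \<theta> (orbit H x) = induced_perm ?\<Delta> k (orbit H x)"
      if "x \<in> \<Omega>" "\<theta> x = g x" for x
    proof -
      have "\<theta> ` orbit H x = g ` orbit H x"
        using that image image_orbit_commuting[of H g x] central g(1) by simp
      also have "\<dots> = k ` orbit H x"
        using image_orbit_abelian[OF perm_group_H abelian hk(2)] by (metis hk(1) image_comp)
      finally show ?thesis by (simp add: induced_perm_def)
    qed
    moreover have "induced_perm ?\<Delta> k \<in> induced_group ?\<Delta> K"
      using hk(3) by (simp add: induced_group_def)
    ultimately show ?thesis
      using \<alpha>\<beta> g by blast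
  qed
  ultimately show ?thesis
    by (simp add: two_closure_def)
qed

end

locale coprime_perm_direct_product = perm_direct_product +
  assumes finite_G: "finite G"
    and coprime_card: "coprime (card H) (card K)"
begin

lemma K_fixes_point_in_H_orbit:
  assumes k: "k \<in> K" and "k \<alpha> \<in> orbit H \<alpha>"
  shows "k \<alpha> = \<alpha>"
proof -
  obtain h where h: "h \<in> H" "k \<alpha> = h \<alpha>"
    using \<open>k \<alpha> \<in> orbit H \<alpha>\<close> by (auto simp: orbit_def)
  have "finite H" "finite K"
    using finite_G H_subset K_subset finite_subset by auto
  then have "k ^^ card K = id" "h ^^ card H = id"
    using perm_group_funpow_card perm_group_H perm_group_K h k by auto
  then show ?thesis
    using commuting_coprime_funpow_fixpoint[OF commute[OF h(1) k] h(2)] coprime_card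
    by (simp add: coprime_commute)
qed

lemma two_closure_H_if_fixes_H_orbits:
  assumes \<theta>: "\<theta> \<in> two_closure \<Omega> G" and fixes_orbits: "\<forall>\<alpha>\<in>\<Omega>. \<theta> \<alpha> \<in> orbit H \<alpha>"
  shows "\<theta> \<in> two_closure \<Omega> H"
  unfolding two_closure_def
proof (intro CollectI conjI ballI)
  show "\<theta> permutes \<Omega>" using \<theta> by (simp add: two_closure_def)
  fix \<alpha> \<beta> assume "\<alpha> \<in> \<Omega>" "\<beta> \<in> \<Omega>"
  then obtain g where g: "g \<in> G" "\<theta> \<alpha> = g \<alpha>" "\<theta> \<beta> = g \<beta>"
    using \<theta> by (auto simp: two_closure_def)
  obtain h k where hk: "g = k \<circ> h" "h \<in> H" "k \<in> K"
    using g(1) by (rule decompose)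
  have "\<theta> x = h x" if "x \<in> \<Omega>" "\<theta> x = g x" for x
  proof -
    have "h (k x) \<in> orbit H x"
      using that fixes_orbits commute[OF hk(2,3)] hk(1) by (metis comp_apply)
    moreover have "h (k x) \<in> orbit H (k x)"
      using hk(2) by (auto simp: orbit_def)
    ultimately have "k x \<in> orbit H x"
      using orbit_eq[OF perm_group_H] orbit_self[OF perm_group_H] by metis
    then have "k x = x" using K_fixes_point_in_H_orbit hk(3) by blast
    then show ?thesis using that hk commute[OF hk(2,3)] by (metis comp_apply)
  qed
  then show "\<exists>h\<in>H. \<theta> \<alpha> = h \<alpha> \<and> \<theta> \<beta> = h \<beta>"
    using \<open>\<alpha> \<in> \<Omega>\<close> \<open>\<beta> \<in> \<Omega>\<close> g hk(2) by blast
qed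

end

theorem mainTheorem5:
  fixes \<Omega> :: "'a set" and G H K :: "('a \<Rightarrow> 'a) set"
  assumes "finite G"
    and "internal_direct_product \<Omega> G H K"
    and "coprime (card H) (card K)"
    and "\<forall>h1\<in>H. \<forall>h2\<in>H. h1 \<circ> h2 = h2 \<circ> h1"
    and "two_closure \<Omega> H = H"
    and "two_closure (orbits \<Omega> H) (induced_group (orbits \<Omega> H) K)
           = induced_group (orbits \<Omega> H) K"
  shows "two_closure \<Omega> G = G"
proof -
  interpret coprime_perm_direct_product \<Omega> G H K
    using assms(1-3) by unfold_locales
  have "\<theta> \<in> G" if \<theta>: "\<theta> \<in> two_closure \<Omega> G" for \<theta>
  proof -
    obtain k where k: "k \<in> K" "induced_perm (orbits \<Omega> H) \<theta> = induced_perm (orbits \<Omega> H) k"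
      using induced_perm_two_closure[OF assms(4) \<theta>] assms(6) by (auto simp: induced_group_def)
    have k_perm: "k permutes \<Omega>"
      using perm_group_permutes[OF perm_group_K k(1)] .
    have "\<forall>\<alpha>\<in>\<Omega>. (inv k \<circ> \<theta>) \<alpha> \<in> orbit H \<alpha>"
      using inv_comp_in_orbit_if_induced_perm_eq[OF perm_group_H k_perm k(2)] by blast
    moreover have "inv k \<circ> \<theta> \<in> two_closure \<Omega> G"
      using two_closure_comp_left[OF perm_group_G _ \<theta>] perm_group_inv[OF perm_group_K k(1)] K_subset
      by blast
    ultimately have "inv k \<circ> \<theta> \<in> H"
      using two_closure_H_if_fixes_H_orbits assms(5) by blast
    moreover have "\<theta> = k \<circ> (inv k \<circ> \<theta>)"
      using permutes_inv_o(1)[OF k_perm] by (simp add: o_assoc)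
    ultimately show "\<theta> \<in> G"
      using G_eq k(1) by blast
  qed
  then show ?thesis
    using subset_two_closure[OF perm_group_G] by blast
qed

end
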